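(* Fix an integer $k\geq 2$. For each $n\geq 1$ there exist a set $X_n$ with $|X_n|=n$ and a function $f_n:X_n\to X_n$ such that, as $n\to\infty$, \[\deg(f_n)=k+1+o(1)\quad\text{and}\quad\deg(f_n^k)=n^{1-1/2^{k-1}}(1+o(1)),\] where $f_n^k$ denotes the $k$-fold iterate of $f_n$.
   Context: For finite sets $X,Y$ and a function $f:X\to Y$, the degree of $f$ is $\deg(f)=\frac{1}{|X|}\sum_{y\in Y}|f^{-1}(y)|^2$. *)

theory Defs
  imports "HOL-Analysis.Analysis"
begin

definition fdeg :: "'a set \<Rightarrow> 'b set \<Rightarrow> ('a \<Rightarrow> 'b) \<Rightarrow> real" where
  "fdeg X Y f = (\<Sum>y\<in>Y. real (card {x\<in>X. f x = y}) ^ 2) / real (card X)"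

end

theory Submission
  imports Defs
begin

(*
  Let f_n collapse a layered tree of depth k onto its root and fix every other point
  of {..<n}. With t = floor (n powr (1 / 2^k)), give every node on level j < k exactly
  t^(2^(k-j-1)) children. Then level j has t^(2^k - 2^(k-j)) nodes, so the tree has
  about t^(2^k - 1) = o(n) nodes and fits into {..<n}. Each level j < k contributes
  (number of nodes) * (children per node)^2 = t^(2^k), which is about n, to the sum of
  squared fibre sizes, and the fixed points outside the tree contribute about n more,
  hence deg f_n -> k + 1. The k-th iterate maps the whole tree to the root, whose fibre
  has about t^(2^k - 1) elements, so deg (f_n^k) is about t^(2^(k+1) - 2) / n, which is
  about n^(1 - 1/2^(k-1)).
*)

section \<open>Layered trees numbered breadth first\<close>

(*
  Every node on level j has b j children. Level j is the interval
  [level_start b j, level_start b (Suc j)), and the node at offset d on level j+1 is a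
  child of the node at offset d div b j on level j. The map tree_map b k sends each
  node on the levels 1, ..., k to its parent and fixes the root 0 and all numbers
  beyond the tree.
*)

definition level_size :: "(nat \<Rightarrow> nat) \<Rightarrow> nat \<Rightarrow> nat" where
  "level_size b j = (\<Prod>i<j. b i)"

definition level_start :: "(nat \<Rightarrow> nat) \<Rightarrow> nat \<Rightarrow> nat" where
  "level_start b j = (\<Sum>i<j. level_size b i)"

definition level :: "(nat \<Rightarrow> nat) \<Rightarrow> nat \<Rightarrow> nat" where
  "level b x = (LEAST j. x < level_start b (Suc j))"

definition tree_size :: "(nat \<Rightarrow> nat) \<Rightarrow> nat \<Rightarrow> nat" where
  "tree_size b k = level_start b (Suc k)"

definition tree_map :: "(nat \<Rightarrow> nat) \<Rightarrow> nat \<Rightarrow> nat \<Rightarrow> nat" where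
  "tree_map b k x =
     (case level b x of
        0 \<Rightarrow> x
      | Suc j \<Rightarrow> if j < k then level_start b j + (x - level_start b (Suc j)) div b j else x)"

lemma level_size_Suc: "level_size b (Suc j) = level_size b j * b j"
  by (simp add: level_size_def)

lemma level_start_Suc: "level_start b (Suc j) = level_start b j + level_size b j"
  by (simp add: level_start_def)

lemma level_start_0 [simp]: "level_start b 0 = 0"
  by (simp add: level_start_def)

lemma level_start_1 [simp]: "level_start b (Suc 0) = 1"
  by (simp add: level_start_def level_size_def)

lemma sum_lessThan_level_start:
  "(\<Sum>y<level_start b m. g y) = (\<Sum>j<m. \<Sum>y\<in>{level_start b j..<level_start b (Suc j)}. g y)"
proof (induction m)
  case (Suc m)
  have "(\<Sum>y<level_start b (Suc m). g y)
      = (\<Sum>y<level_start b m. g y) + (\<Sum>y\<in>{level_start b m..<level_start b (Suc m)}. g y)"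
    using sum.atLeastLessThan_concat[of 0 "level_start b m" "level_start b (Suc m)" g]
    by (simp add: level_start_Suc lessThan_atLeast0)
  then show ?case
    using Suc by simp
qed simp

lemma fdeg_lessThan:
  "fdeg {..<n} {..<n} f = real (\<Sum>y<n. card {x\<in>{..<n}. f x = y} ^ 2) / real n"
  by (simp add: fdeg_def)

context
  fixes b :: "nat \<Rightarrow> nat"
  assumes branching_pos: "\<And>i. 0 < b i"
begin

lemma level_size_pos: "0 < level_size b j"
  using branching_pos by (simp add: level_size_def)

lemma level_start_strict_mono: "strict_mono (level_start b)"
  by (rule strict_mono_Suc_iff[THEN iffD2]) (simp add: level_start_Suc level_size_pos)

lemma level_start_less_iff [simp]: "level_start b i < level_start b j \<longleftrightarrow> i < j"
  by (rule strict_mono_less[OF level_start_strict_mono])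

lemma level_start_le_iff [simp]: "level_start b i \<le> level_start b j \<longleftrightarrow> i \<le> j"
  by (rule strict_mono_less_eq[OF level_start_strict_mono])

lemma level_bounds:
  "level_start b (level b x) \<le> x" "x < level_start b (Suc (level b x))"
proof -
  have "x < level_start b (Suc x)"
    using strict_mono_imp_increasing[OF level_start_strict_mono, of "Suc x"] by simp
  then show "x < level_start b (Suc (level b x))"
    unfolding level_def by (rule LeastI)
  show "level_start b (level b x) \<le> x"
  proof (cases "level b x")
    case (Suc j)
    then have "\<not> x < level_start b (Suc j)"
      using not_less_Least[of j "\<lambda>j. x < level_start b (Suc j)"] by (simp add: level_def)
    then show ?thesis
      using Suc by simp
  qed simp
qed

lemma level_eqI:
  assumes "level_start b j \<le> x" "x < level_start b (Suc j)"
  shows "level b x = j"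
  unfolding level_def
proof (rule Least_equality)
  fix i
  assume "x < level_start b (Suc i)"
  then have "level_start b j < level_start b (Suc i)"
    using assms(1) by linarith
  then show "j \<le> i"
    by simp
qed (fact assms(2))

lemma level_eq_0_iff: "level b x = 0 \<longleftrightarrow> x = 0"
  using level_bounds[of x] level_eqI[of 0 x] by auto

lemma level_0 [simp]: "level b 0 = 0"
  using level_eq_0_iff by simp

lemma level_le_iff: "level b x \<le> k \<longleftrightarrow> x < tree_size b k"
proof
  assume "level b x \<le> k"
  then show "x < tree_size b k"
    using level_bounds(2)[of x] level_start_le_iff[of "Suc (level b x)" "Suc k"]
    unfolding tree_size_def by linarith
next
  assume "x < tree_size b k"
  then have "level_start b (level b x) < level_start b (Suc k)"
    using level_bounds(1)[of x] unfolding tree_size_def by linarith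
  then show "level b x \<le> k"
    by simp
qed

lemma tree_size_pos: "0 < tree_size b k"
  using level_le_iff[of 0 k] by simp

lemma tree_map_0 [simp]: "tree_map b k 0 = 0"
  by (simp add: tree_map_def)

lemma tree_map_beyond: "tree_size b k \<le> x \<Longrightarrow> tree_map b k x = x"
  using level_le_iff[of x k] by (auto simp: tree_map_def split: nat.split)

lemma tree_map_le: "tree_map b k x \<le> x"
proof -
  have "level_start b j + (x - level_start b (Suc j)) div b j \<le> x" if "level b x = Suc j" for j
  proof -
    have "level_start b (Suc j) \<le> x"
      using level_bounds(1)[of x] that by simp
    moreover have "level_start b j \<le> level_start b (Suc j)"
      by simp
    ultimately show ?thesis
      using div_le_dividend[of "x - level_start b (Suc j)" "b j"] by linarith
  qed
  then show ?thesis
    by (auto simp: tree_map_def split: nat.split)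
qed

lemma tree_map_level_Suc:
  assumes "level b x = Suc j" "j < k"
  shows "tree_map b k x = level_start b j + (x - level_start b (Suc j)) div b j"
    and "level b (tree_map b k x) = j"
proof -
  show eq: "tree_map b k x = level_start b j + (x - level_start b (Suc j)) div b j"
    using assms by (simp add: tree_map_def)
  have "x - level_start b (Suc j) < level_size b j * b j"
    using level_bounds[of x] assms(1) by (simp add: level_start_Suc level_size_Suc)
  then have "(x - level_start b (Suc j)) div b j < level_size b j"
    by (simp add: div_less_iff_less_mult branching_pos)
  then show "level b (tree_map b k x) = j"
    unfolding eq by (intro level_eqI) (simp_all add: level_start_Suc)
qed

lemma level_tree_map: "level b x \<le> k \<Longrightarrow> level b (tree_map b k x) = level b x - 1"
  by (cases "level b x") (simp_all add: tree_map_level_Suc(2) level_eq_0_iff)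

lemma funpow_tree_map: "(tree_map b k ^^ k) x = (if x < tree_size b k then 0 else x)"
proof (cases "x < tree_size b k")
  case True
  have "level b ((tree_map b k ^^ i) x) = level b x - i" for i
    by (induction i) (use True in \<open>simp_all add: level_le_iff[symmetric] level_tree_map\<close>)
  then have "level b ((tree_map b k ^^ k) x) = 0"
    using True level_le_iff[of x k] by simp
  then show ?thesis
    using True by (simp add: level_eq_0_iff)
next
  case False
  then have "(tree_map b k ^^ i) x = x" for i
    by (induction i) (simp_all add: tree_map_beyond)
  then show ?thesis
    using False by simp
qed

lemma tree_map_eq_cases:
  assumes "tree_map b k x = y" "level b y = j" "j < k"
  shows "x = 0 \<and> j = 0 \<or> x \<in> {level_start b (Suc j) + (y - level_start b j) * b j
      ..<level_start b (Suc j) + Suc (y - level_start b j) * b j}"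
proof (cases "level b x")
  case 0
  then show ?thesis
    using assms(1,2) by (simp add: level_eq_0_iff)
next
  case (Suc i)
  have "i < k"
  proof (rule ccontr)
    assume "\<not> i < k"
    then have "y = x"
      using assms(1) Suc by (simp add: tree_map_def)
    then show False
      using assms(2,3) Suc \<open>\<not> i < k\<close> by simp
  qed
  then have "i = j"
    using tree_map_level_Suc(2)[OF Suc \<open>i < k\<close>] assms(1,2) by simp
  define u where "u = x - level_start b (Suc j)"
  define d where "d = y - level_start b j"
  have "u div b j = d"
    using tree_map_level_Suc(1)[OF Suc \<open>i < k\<close>] assms(1) unfolding \<open>i = j\<close> u_def d_def by simp
  then have "d * b j \<le> u" "u < Suc d * b j"
    using div_times_less_eq_dividend[of u "b j"] dividend_less_div_times[of "b j" u] branching_pos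
    by simp_all
  moreover have "level_start b (Suc j) \<le> x"
    using level_bounds(1)[of x] Suc \<open>i = j\<close> by simp
  ultimately show ?thesis
    unfolding u_def d_def by auto
qed

lemma tree_map_child:
  assumes "level b y = j" "j < k"
    and "x \<in> {level_start b (Suc j) + (y - level_start b j) * b j
      ..<level_start b (Suc j) + Suc (y - level_start b j) * b j}"
  shows "tree_map b k x = y" "x < tree_size b k"
proof -
  define d where "d = y - level_start b j"
  have "d < level_size b j"
    using level_bounds[of y] assms(1) unfolding d_def by (simp add: level_start_Suc)
  then have "Suc d * b j \<le> level_size b (Suc j)"
    unfolding level_size_Suc by (intro mult_le_mono1) simp
  then have "x < level_start b (Suc (Suc j))"
    using assms(3) unfolding d_def by (simp add: level_start_Suc[of b "Suc j"])
  then have level_x: "level b x = Suc j"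
    using assms(3) by (intro level_eqI) auto
  have "(x - level_start b (Suc j)) div b j = d"
    using assms(3) unfolding d_def by (intro div_nat_eqI) (auto simp: mult.commute)
  then show "tree_map b k x = y"
    using tree_map_level_Suc(1)[OF level_x assms(2)] level_bounds(1)[of y] assms(1)
    unfolding d_def by simp
  show "x < tree_size b k"
    using level_le_iff[of x k] level_x assms(2) by simp
qed

lemma tree_map_fibre:
  assumes "tree_size b k \<le> n" "level b y = j" "j < k"
  shows "{x\<in>{..<n}. tree_map b k x = y} =
      {level_start b (Suc j) + (y - level_start b j) * b j
        ..<level_start b (Suc j) + Suc (y - level_start b j) * b j}
      \<union> (if j = 0 then {0} else {})"
    (is "?fibre = ?children \<union> ?root")
proof (intro equalityI subsetI)
  fix x
  assume "x \<in> ?fibre"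
  then have "x = 0 \<and> j = 0 \<or> x \<in> ?children"
    using tree_map_eq_cases[OF _ assms(2,3)] by simp
  then show "x \<in> ?children \<union> ?root"
    by auto
next
  fix x
  assume "x \<in> ?children \<union> ?root"
  then consider "j = 0" "x = 0" | "x \<in> ?children"
    by (auto split: if_splits)
  then show "x \<in> ?fibre"
  proof cases
    case 1
    then show ?thesis
      using assms tree_size_pos[of k] by (simp add: level_eq_0_iff)
  next
    case 2
    then show ?thesis
      using tree_map_child[OF assms(2,3) 2] assms(1) by simp
  qed
qed

lemma card_tree_map_fibre:
  assumes "tree_size b k \<le> n" "level b y = j" "j < k"
  shows "card {x\<in>{..<n}. tree_map b k x = y} = b j + (if j = 0 then 1 else 0)"
proof -
  have "0 < level_start b (Suc j)"
    using level_start_less_iff[of 0 "Suc j"] by simp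
  then show ?thesis
    unfolding tree_map_fibre[OF assms] by (simp add: card_insert_if)
qed

lemma tree_map_fibre_leaf:
  assumes "0 < k" "level b y = k"
  shows "{x\<in>{..<n}. tree_map b k x = y} = {}"
proof -
  have "level b (tree_map b k x) \<noteq> k" for x
  proof (cases "level b x \<le> k")
    case True
    then show ?thesis
      using level_tree_map[OF True] assms(1) by linarith
  next
    case False
    then show ?thesis
      using tree_map_beyond[of k x] level_le_iff[of x k] by simp
  qed
  then have "tree_map b k x \<noteq> y" for x
    using assms(2) by metis
  then show ?thesis
    by simp
qed

lemma tree_map_fibre_beyond:
  assumes "tree_size b k \<le> y" "y < n"
  shows "{x\<in>{..<n}. tree_map b k x = y} = {y}"
proof -
  have "tree_map b k x = y \<longleftrightarrow> x = y" for x
    using tree_map_le[of k x] tree_map_beyond[of k x] tree_map_beyond[of k y] assms(1)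
    by (cases "x < tree_size b k") auto
  then show ?thesis
    using assms(2) by auto
qed

lemma sum_card_tree_map_fibre_sq:
  assumes "0 < k" "tree_size b k \<le> n"
  shows "(\<Sum>y<n. card {x\<in>{..<n}. tree_map b k x = y} ^ 2)
    = (\<Sum>j<k. level_size b j * b j ^ 2) + 2 * b 0 + 1 + (n - tree_size b k)"
proof -
  let ?c = "\<lambda>y. card {x\<in>{..<n}. tree_map b k x = y} ^ 2"
  let ?T = "tree_size b k"
  have level_sum: "(\<Sum>y\<in>{level_start b j..<level_start b (Suc j)}. ?c y)
      = level_size b j * b j ^ 2 + (if j = 0 then 2 * b 0 + 1 else 0)" if "j < k" for j
  proof -
    have "?c y = (b j + (if j = 0 then 1 else 0)) ^ 2"
      if "y \<in> {level_start b j..<level_start b (Suc j)}" for y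
      using card_tree_map_fibre[OF assms(2) level_eqI \<open>j < k\<close>] that by simp
    then show ?thesis
      by (simp add: level_start_Suc power2_eq_square algebra_simps level_size_def)
  qed
  have leaves: "(\<Sum>y\<in>{level_start b k..<level_start b (Suc k)}. ?c y) = 0"
    using tree_map_fibre_leaf[OF assms(1) level_eqI] by simp
  have "(\<Sum>y<?T. ?c y)
      = (\<Sum>j<k. \<Sum>y\<in>{level_start b j..<level_start b (Suc j)}. ?c y)
        + (\<Sum>y\<in>{level_start b k..<level_start b (Suc k)}. ?c y)"
    unfolding tree_size_def sum_lessThan_level_start by simp
  also have "\<dots> = (\<Sum>j<k. level_size b j * b j ^ 2 + (if j = 0 then 2 * b 0 + 1 else 0))"
    unfolding leaves add_0_right by (rule sum.cong[OF refl], rule level_sum) simp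
  also have "\<dots> = (\<Sum>j<k. level_size b j * b j ^ 2) + 2 * b 0 + 1"
    using assms(1) by (simp add: sum.distrib)
  finally have "(\<Sum>y<?T. ?c y) = (\<Sum>j<k. level_size b j * b j ^ 2) + 2 * b 0 + 1" .
  moreover have "(\<Sum>y\<in>{?T..<n}. ?c y) = n - ?T"
    using tree_map_fibre_beyond by simp
  moreover have "(\<Sum>y<n. ?c y) = (\<Sum>y<?T. ?c y) + (\<Sum>y\<in>{?T..<n}. ?c y)"
    using sum.atLeastLessThan_concat[of 0 ?T n ?c] assms(2) by (simp add: lessThan_atLeast0)
  ultimately show ?thesis
    by simp
qed

lemma sum_card_funpow_tree_map_fibre_sq:
  assumes "tree_size b k \<le> n"
  shows "(\<Sum>y<n. card {x\<in>{..<n}. (tree_map b k ^^ k) x = y} ^ 2)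
    = tree_size b k ^ 2 + (n - tree_size b k)"
proof -
  let ?c = "\<lambda>y. card {x\<in>{..<n}. (tree_map b k ^^ k) x = y} ^ 2"
  let ?T = "tree_size b k"
  have "{x\<in>{..<n}. (tree_map b k ^^ k) x = 0} = {..<?T}"
    using assms tree_size_pos[of k] by (auto simp: funpow_tree_map)
  moreover have "{x\<in>{..<n}. (tree_map b k ^^ k) x = y} = {}" if "0 < y" "y < ?T" for y
    using that by (auto simp: funpow_tree_map)
  ultimately have "(\<Sum>y<?T. ?c y) = (\<Sum>y<?T. if y = 0 then ?T ^ 2 else 0)"
    by (intro sum.cong) auto
  moreover have "(\<Sum>y\<in>{?T..<n}. ?c y) = n - ?T"
  proof -
    have "{x\<in>{..<n}. (tree_map b k ^^ k) x = y} = {y}" if "y \<in> {?T..<n}" for y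
      using that tree_size_pos[of k] by (auto simp: funpow_tree_map)
    then show ?thesis
      by simp
  qed
  moreover have "(\<Sum>y<n. ?c y) = (\<Sum>y<?T. ?c y) + (\<Sum>y\<in>{?T..<n}. ?c y)"
    using sum.atLeastLessThan_concat[of 0 ?T n ?c] assms by (simp add: lessThan_atLeast0)
  ultimately show ?thesis
    using tree_size_pos[of k] by simp
qed

lemma fdeg_funpow_tree_map:
  assumes "tree_size b k \<le> n"
  shows "fdeg {..<n} {..<n} (tree_map b k ^^ k)
    = (real (tree_size b k) ^ 2 + real n - real (tree_size b k)) / real n"
  unfolding fdeg_lessThan sum_card_funpow_tree_map_fibre_sq[OF assms]
  using assms by simp

end

section \<open>Branching factors that square from level to level\<close>

definition tower_branching :: "nat \<Rightarrow> nat \<Rightarrow> nat \<Rightarrow> nat" where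
  "tower_branching k t i = t ^ 2 ^ (k - Suc i)"

lemma tower_branching_pos: "1 \<le> t \<Longrightarrow> 0 < tower_branching k t i"
  by (simp add: tower_branching_def)

lemma level_size_tower_branching:
  "j \<le> k \<Longrightarrow> level_size (tower_branching k t) j = t ^ (2 ^ k - 2 ^ (k - j))"
proof (induction j)
  case (Suc j)
  obtain e where e: "k - j = Suc e" "k - Suc j = e"
    using Suc.prems by (metis Suc_diff_Suc Suc_le_lessD)
  have "(2::nat) ^ (k - j) \<le> 2 ^ k"
    by (simp add: power_increasing)
  then have "2 ^ k - 2 ^ (k - j) + 2 ^ (k - Suc j) = 2 ^ k - (2::nat) ^ (k - Suc j)"
    unfolding e by simp
  then show ?case
    using Suc by (simp add: level_size_Suc tower_branching_def power_add[symmetric])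
qed (simp add: level_size_def)

lemma level_size_mult_sq_tower_branching:
  assumes "j < k"
  shows "level_size (tower_branching k t) j * tower_branching k t j ^ 2 = t ^ 2 ^ k"
proof -
  have "2 ^ (k - Suc j) * 2 = (2::nat) ^ (k - j)"
    using assms by (simp add: Suc_diff_Suc flip: power_Suc2)
  moreover have "(2::nat) ^ (k - j) \<le> 2 ^ k"
    by (simp add: power_increasing)
  ultimately have "2 ^ k - 2 ^ (k - j) + 2 ^ (k - Suc j) * 2 = (2::nat) ^ k"
    by simp
  then show ?thesis
    using assms unfolding level_size_tower_branching[OF less_imp_le[OF assms]] tower_branching_def
    by (metis power_add power_mult)
qed

lemma tree_size_tower_branching:
  "tree_size (tower_branching k t) k = level_start (tower_branching k t) k + t ^ (2 ^ k - 1)"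
  by (simp add: tree_size_def level_start_Suc level_size_tower_branching)

lemma level_start_tower_branching_le:
  assumes "1 \<le> t"
  shows "level_start (tower_branching k t) k \<le> k * t ^ (2 ^ k - 2)"
proof -
  have "level_size (tower_branching k t) j \<le> t ^ (2 ^ k - 2)" if "j < k" for j
  proof -
    have "(2::nat) ^ 1 \<le> 2 ^ (k - j)"
      using that by (intro power_increasing) auto
    then have "2 ^ k - 2 ^ (k - j) \<le> (2::nat) ^ k - 2"
      by simp
    then show ?thesis
      using that assms by (simp add: level_size_tower_branching power_increasing)
  qed
  then have "(\<Sum>j<k. level_size (tower_branching k t) j) \<le> of_nat (card {..<k}) * t ^ (2 ^ k - 2)"
    by (intro sum_bounded_above) simp
  then show ?thesis
    by (simp add: level_start_def)
qed

lemma tree_size_tower_branching_le: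
  assumes "1 \<le> t"
  shows "tree_size (tower_branching k t) k \<le> (k + 1) * t ^ (2 ^ k - 1)"
proof -
  have "t ^ (2 ^ k - 2) \<le> t ^ (2 ^ k - 1)"
    using assms by (intro power_increasing) auto
  then have "k * t ^ (2 ^ k - 2) \<le> k * t ^ (2 ^ k - 1)"
    by (rule mult_le_mono2)
  moreover have "tree_size (tower_branching k t) k \<le> k * t ^ (2 ^ k - 2) + t ^ (2 ^ k - 1)"
    using level_start_tower_branching_le[OF assms, of k]
    unfolding tree_size_tower_branching by linarith
  ultimately show ?thesis
    by (simp only: add_mult_distrib mult_1_left)
qed

lemma fdeg_tree_map_tower_branching:
  assumes "0 < k" "1 \<le> t" "tree_size (tower_branching k t) k \<le> n"
  shows "fdeg {..<n} {..<n} (tree_map (tower_branching k t) k)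
    = (real k * real t ^ 2 ^ k + 2 * real t ^ 2 ^ (k - 1) + 1 + real n
        - real (tree_size (tower_branching k t) k)) / real n"
proof -
  have "(\<Sum>j<k. level_size (tower_branching k t) j * tower_branching k t j ^ 2) = k * t ^ 2 ^ k"
    by (simp add: level_size_mult_sq_tower_branching)
  then show ?thesis
    unfolding fdeg_lessThan
      sum_card_tree_map_fibre_sq[OF tower_branching_pos[OF assms(2)] assms(1,3)]
    using assms(3) by (simp add: tower_branching_def)
qed

section \<open>Asymptotics\<close>

lemma filterlim_root_at_top: "0 < M \<Longrightarrow> filterlim (root M) at_top at_top"
  unfolding filterlim_at_top
proof
  fix Z :: real
  assume "0 < M"
  have "eventually (\<lambda>x. max Z 0 ^ M \<le> x) at_top"
    by (rule eventually_ge_at_top)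
  then show "eventually (\<lambda>x. Z \<le> root M x) at_top"
  proof (rule eventually_mono)
    fix x
    assume "max Z 0 ^ M \<le> x"
    then have "root M (max Z 0 ^ M) \<le> root M x"
      using \<open>0 < M\<close> by simp
    then show "Z \<le> root M x"
      using \<open>0 < M\<close> by (simp add: real_root_power_cancel)
  qed
qed

lemma tendsto_nat_floor_div_self:
  fixes r :: "'a \<Rightarrow> real"
  assumes "filterlim r at_top F"
  shows "((\<lambda>x. real (nat \<lfloor>r x\<rfloor>) / r x) \<longlongrightarrow> 1) F"
proof (rule tendsto_sandwich)
  have "eventually (\<lambda>x. 1 \<le> r x) F"
    using assms by (simp add: filterlim_at_top)
  then show "eventually (\<lambda>x. 1 - inverse (r x) \<le> real (nat \<lfloor>r x\<rfloor>) / r x) F"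
    and "eventually (\<lambda>x. real (nat \<lfloor>r x\<rfloor>) / r x \<le> 1) F"
    by (auto elim!: eventually_mono simp: field_simps) linarith+
  show "((\<lambda>x. 1 - inverse (r x)) \<longlongrightarrow> 1) F"
    using tendsto_diff[OF tendsto_const tendsto_inverse_0_at_top[OF assms], of 1] by simp
qed simp

lemma tendsto_divide_power_0:
  fixes r g :: "'a \<Rightarrow> real"
  assumes "filterlim r at_top F" "p < q" "eventually (\<lambda>x. \<bar>g x\<bar> \<le> c * r x ^ p) F"
  shows "((\<lambda>x. g x / r x ^ q) \<longlongrightarrow> 0) F"
proof (rule Lim_null_comparison)
  have "eventually (\<lambda>x. 1 \<le> r x) F"
    using assms(1) by (simp add: filterlim_at_top)
  with assms(3) show "eventually (\<lambda>x. norm (g x / r x ^ q) \<le> c * inverse (r x)) F"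
  proof eventually_elim
    case (elim x)
    then have "0 \<le> c * r x ^ p"
      by (meson abs_ge_zero order_trans)
    moreover have "r x ^ p * r x \<le> r x ^ q"
      using elim assms(2) power_increasing[of "Suc p" q "r x"] by (simp add: mult.commute)
    ultimately have "\<bar>g x\<bar> / r x ^ q \<le> c * r x ^ p / (r x ^ p * r x)"
      using elim by (intro frac_le) auto
    moreover have "c * r x ^ p / (r x ^ p * r x) = c * inverse (r x)"
      using elim by (simp add: field_simps)
    ultimately show ?case
      using elim by simp
  qed
  show "((\<lambda>x. c * inverse (r x)) \<longlongrightarrow> 0) F"
    using tendsto_mult_right_zero[OF tendsto_inverse_0_at_top[OF assms(1)]] by simp
qed

definition fitted_scale :: "nat \<Rightarrow> nat \<Rightarrow> nat" where
  "fitted_scale k n = nat \<lfloor>root (2 ^ k) (real n)\<rfloor>"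

definition fitted_tree_map :: "nat \<Rightarrow> nat \<Rightarrow> nat \<Rightarrow> nat" where
  "fitted_tree_map k n = tree_map (tower_branching k (fitted_scale k n)) k"

lemma fitted_scale_0 [simp]: "fitted_scale k 0 = 0"
  by (simp add: fitted_scale_def)

lemma fitted_scale_le_root: "real (fitted_scale k n) \<le> root (2 ^ k) (real n)"
  by (simp add: fitted_scale_def)

lemma filterlim_root_sequentially: "filterlim (\<lambda>n. root (2 ^ k) (real n)) at_top sequentially"
  using filterlim_compose[OF filterlim_root_at_top filterlim_real_sequentially] by simp

lemma tendsto_fitted_scale_div_root:
  "(\<lambda>n. real (fitted_scale k n) / root (2 ^ k) (real n)) \<longlonglongrightarrow> 1"
  unfolding fitted_scale_def by (rule tendsto_nat_floor_div_self[OF filterlim_root_sequentially])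

lemma eventually_fitted_scale_ge: "eventually (\<lambda>n. m \<le> fitted_scale k n) sequentially"
proof -
  have "eventually (\<lambda>n. real m \<le> root (2 ^ k) (real n)) sequentially"
    using filterlim_root_sequentially by (simp add: filterlim_at_top)
  then show ?thesis
    by eventually_elim (simp add: fitted_scale_def le_nat_floor)
qed

lemma eventually_tree_size_le:
  "eventually (\<lambda>n. tree_size (tower_branching k (fitted_scale k n)) k \<le> n) sequentially"
  using eventually_fitted_scale_ge[of "k + 1" k]
proof eventually_elim
  case (elim n)
  let ?t = "fitted_scale k n"
  have "tree_size (tower_branching k ?t) k \<le> (k + 1) * ?t ^ (2 ^ k - 1)"
    using elim by (intro tree_size_tower_branching_le) simp
  also have "\<dots> \<le> ?t * ?t ^ (2 ^ k - 1)"
    using elim by (rule mult_le_mono1)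
  also have "\<dots> = ?t ^ 2 ^ k"
    using power_Suc[of ?t "2 ^ k - 1"] by simp
  also have "\<dots> \<le> n"
  proof -
    have "real ?t ^ 2 ^ k \<le> root (2 ^ k) (real n) ^ 2 ^ k"
      by (intro power_mono fitted_scale_le_root) simp
    then have "real (?t ^ 2 ^ k) \<le> real n"
      by simp
    then show ?thesis
      by (simp only: of_nat_le_iff)
  qed
  finally show ?case .
qed

lemma fitted_tree_map_lessThan: "fitted_tree_map k n ` {..<n} \<subseteq> {..<n}"
proof (cases "n = 0")
  case False
  then have "1 \<le> fitted_scale k n"
    by (simp add: fitted_scale_def le_nat_floor)
  then have "fitted_tree_map k n x \<le> x" for x
    unfolding fitted_tree_map_def by (rule tree_map_le[OF tower_branching_pos])
  then show ?thesis
    using le_less_trans by blast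
qed simp

lemma tendsto_fitted_tree_size:
  assumes "0 < k"
  shows "(\<lambda>n. real (tree_size (tower_branching k (fitted_scale k n)) k)
      / root (2 ^ k) (real n) ^ (2 ^ k - 1)) \<longlonglongrightarrow> 1"
proof -
  let ?r = "\<lambda>n. root (2 ^ k) (real n)"
  let ?t = "\<lambda>n. real (fitted_scale k n)"
  let ?S = "\<lambda>n. real (level_start (tower_branching k (fitted_scale k n)) k)"
  have lower_levels: "(\<lambda>n. ?S n / ?r n ^ (2 ^ k - 1)) \<longlonglongrightarrow> 0"
  proof (rule tendsto_divide_power_0[OF filterlim_root_sequentially, where c = "real k"])
    show "2 ^ k - 2 < (2::nat) ^ k - 1"
      using power_increasing[of 1 k "2::nat"] assms by simp
    show "eventually (\<lambda>n. \<bar>?S n\<bar> \<le> real k * ?r n ^ (2 ^ k - 2)) sequentially"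
      using eventually_fitted_scale_ge[of 1 k]
    proof eventually_elim
      case (elim n)
      then have "level_start (tower_branching k (fitted_scale k n)) k
          \<le> k * fitted_scale k n ^ (2 ^ k - 2)"
        by (rule level_start_tower_branching_le)
      then have "?S n \<le> real (k * fitted_scale k n ^ (2 ^ k - 2))"
        by (simp only: of_nat_le_iff)
      also have "\<dots> \<le> real k * ?r n ^ (2 ^ k - 2)"
        by (simp add: mult_left_mono power_mono fitted_scale_le_root)
      finally show ?case
        by simp
    qed
  qed
  have "(\<lambda>n. (?t n / ?r n) ^ (2 ^ k - 1) + ?S n / ?r n ^ (2 ^ k - 1)) \<longlonglongrightarrow> 1 ^ (2 ^ k - 1) + 0"
    by (intro tendsto_intros tendsto_fitted_scale_div_root lower_levels)
  then show ?thesis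
    by (simp add: tree_size_tower_branching add_divide_distrib power_divide add.commute)
qed

lemma fdeg_fitted_tree_map_eq:
  assumes "0 < k" "1 \<le> fitted_scale k n" "tree_size (tower_branching k (fitted_scale k n)) k \<le> n"
  defines "t \<equiv> real (fitted_scale k n)"
    and "T \<equiv> real (tree_size (tower_branching k (fitted_scale k n)) k)"
    and "r \<equiv> root (2 ^ k) (real n)"
  shows "fdeg {..<n} {..<n} (fitted_tree_map k n)
    = real k * (t / r) ^ 2 ^ k + (2 * t ^ 2 ^ (k - 1) + 1) / r ^ 2 ^ k + 1 - T / r ^ 2 ^ k"
proof -
  have "0 < n"
    using assms(2) by (cases n) simp_all
  then show ?thesis
    unfolding fitted_tree_map_def fdeg_tree_map_tower_branching[OF assms(1-3)] t_def T_def r_def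
    by (simp add: field_simps)
qed

lemma tendsto_fdeg_fitted_tree_map:
  assumes "0 < k"
  shows "(\<lambda>n. fdeg {..<n} {..<n} (fitted_tree_map k n)) \<longlonglongrightarrow> real k + 1"
proof -
  let ?r = "\<lambda>n. root (2 ^ k) (real n)"
  let ?t = "\<lambda>n. real (fitted_scale k n)"
  let ?T = "\<lambda>n. real (tree_size (tower_branching k (fitted_scale k n)) k)"
  have root_fibre_excess: "(\<lambda>n. (2 * ?t n ^ 2 ^ (k - 1) + 1) / ?r n ^ 2 ^ k) \<longlonglongrightarrow> 0"
  proof (rule tendsto_divide_power_0[OF filterlim_root_sequentially, where c = 3])
    show "(2::nat) ^ (k - 1) < 2 ^ k"
      using assms by simp
    show "eventually (\<lambda>n. \<bar>2 * ?t n ^ 2 ^ (k - 1) + 1\<bar> \<le> 3 * ?r n ^ 2 ^ (k - 1)) sequentially"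
      using eventually_fitted_scale_ge[of 1 k]
    proof eventually_elim
      case (elim n)
      then have "1 \<le> ?t n ^ 2 ^ (k - 1)"
        by simp
      moreover have "?t n ^ 2 ^ (k - 1) \<le> ?r n ^ 2 ^ (k - 1)"
        by (intro power_mono fitted_scale_le_root) simp
      ultimately show ?case
        by linarith
    qed
  qed
  have "(\<lambda>n. ?T n / ?r n ^ (2 ^ k - 1) * inverse (?r n)) \<longlonglongrightarrow> 1 * 0"
    using tendsto_fitted_tree_size[OF assms] tendsto_inverse_0_at_top[OF filterlim_root_sequentially]
    by (rule tendsto_mult)
  then have tree_size_negligible: "(\<lambda>n. ?T n / ?r n ^ 2 ^ k) \<longlonglongrightarrow> 0"
    by (simp add: divide_inverse mult.assoc flip: power_minus_mult[of "2 ^ k", OF zero_less_power])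
  have "(\<lambda>n. real k * (?t n / ?r n) ^ 2 ^ k + (2 * ?t n ^ 2 ^ (k - 1) + 1) / ?r n ^ 2 ^ k + 1
      - ?T n / ?r n ^ 2 ^ k) \<longlonglongrightarrow> real k * 1 ^ 2 ^ k + 0 + 1 - 0"
    by (intro tendsto_intros tendsto_fitted_scale_div_root root_fibre_excess tree_size_negligible)
  moreover have "eventually (\<lambda>n. real k * (?t n / ?r n) ^ 2 ^ k
      + (2 * ?t n ^ 2 ^ (k - 1) + 1) / ?r n ^ 2 ^ k + 1 - ?T n / ?r n ^ 2 ^ k
      = fdeg {..<n} {..<n} (fitted_tree_map k n)) sequentially"
    using eventually_fitted_scale_ge[of 1 k] eventually_tree_size_le[of k]
    by eventually_elim (simp add: fdeg_fitted_tree_map_eq[OF assms])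
  ultimately show ?thesis
    by (simp add: Lim_transform_eventually)
qed

lemma fdeg_funpow_fitted_tree_map_eq:
  assumes "0 < k" "1 \<le> fitted_scale k n" "tree_size (tower_branching k (fitted_scale k n)) k \<le> n"
  defines "T \<equiv> real (tree_size (tower_branching k (fitted_scale k n)) k)"
    and "r \<equiv> root (2 ^ k) (real n)"
  shows "fdeg {..<n} {..<n} (fitted_tree_map k n ^^ k) / real n powr (1 - 1 / 2 ^ (k - 1))
    = (T / r ^ (2 ^ k - 1)) ^ 2 + (1 - T / real n) / r ^ (2 ^ k - 2)"
proof -
  obtain j where j: "k = Suc j"
    using assms(1) by (cases k) auto
  define m :: nat where "m = 2 ^ k - 2"
  have "2 \<le> (2::nat) ^ k"
    using power_increasing[of 1 k "2::nat"] assms(1) by simp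
  then have m: "2 ^ k = m + 2"
    unfolding m_def by simp
  have m_real: "real m = 2 * 2 ^ j - 2"
    using arg_cong[OF m, of real] unfolding j by simp
  have "0 < n"
    using assms(2) by (cases n) simp_all
  have "1 - 1 / 2 ^ (k - 1) = real m * (1 / 2 ^ k)"
    unfolding m_real j by (simp add: field_simps)
  then have powr: "real n powr (1 - 1 / 2 ^ (k - 1)) = r ^ m"
    using \<open>0 < n\<close> unfolding r_def by (simp add: root_powr_inverse powr_power)
  have "fdeg {..<n} {..<n} (fitted_tree_map k n ^^ k) = (T ^ 2 + real n - T) / real n"
    unfolding fitted_tree_map_def T_def using assms(2,3)
    by (intro fdeg_funpow_tree_map tower_branching_pos)
  moreover have "(T ^ 2 + x - T) / x / r ^ m = (T / r ^ (m + 1)) ^ 2 + (1 - T / x) / r ^ m"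
    if "r ^ (m + 2) = x" "0 < x" for x
  proof -
    have "r \<noteq> 0"
      using that by auto
    then show ?thesis
      unfolding that(1)[symmetric] by (simp add: field_simps power2_eq_square)
  qed
  moreover have "r ^ (m + 2) = real n"
    unfolding r_def by (subst m[symmetric]) simp
  ultimately show ?thesis
    using \<open>0 < n\<close> unfolding powr by (simp add: m)
qed

lemma tendsto_fdeg_funpow_fitted_tree_map:
  assumes "2 \<le> k"
  shows "(\<lambda>n. fdeg {..<n} {..<n} (fitted_tree_map k n ^^ k) / real n powr (1 - 1 / 2 ^ (k - 1)))
    \<longlonglongrightarrow> 1"
proof -
  let ?r = "\<lambda>n. root (2 ^ k) (real n)"
  let ?T = "\<lambda>n. real (tree_size (tower_branching k (fitted_scale k n)) k)"
  have "0 < k"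
    using assms by simp
  have outside: "(\<lambda>n. (1 - ?T n / real n) / ?r n ^ (2 ^ k - 2)) \<longlonglongrightarrow> 0"
  proof (rule tendsto_divide_power_0[OF filterlim_root_sequentially, where c = 1 and p = 0])
    show "0 < (2::nat) ^ k - 2"
      using power_strict_increasing[of 1 k "2::nat"] assms by simp
    show "eventually (\<lambda>n. \<bar>1 - ?T n / real n\<bar> \<le> 1 * ?r n ^ 0) sequentially"
      using eventually_tree_size_le[of k]
    proof eventually_elim
      case (elim n)
      then have "?T n / real n \<le> 1"
        by (cases "n = 0") (simp_all add: divide_le_eq_1)
      then show ?case
        by simp
    qed
  qed
  have "(\<lambda>n. (?T n / ?r n ^ (2 ^ k - 1)) ^ 2 + (1 - ?T n / real n) / ?r n ^ (2 ^ k - 2))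
      \<longlonglongrightarrow> 1 ^ 2 + 0"
    by (intro tendsto_intros tendsto_fitted_tree_size[OF \<open>0 < k\<close>] outside)
  moreover have "eventually (\<lambda>n. (?T n / ?r n ^ (2 ^ k - 1)) ^ 2 + (1 - ?T n / real n) / ?r n ^ (2 ^ k - 2)
      = fdeg {..<n} {..<n} (fitted_tree_map k n ^^ k) / real n powr (1 - 1 / 2 ^ (k - 1)))
      sequentially"
    using eventually_fitted_scale_ge[of 1 k] eventually_tree_size_le[of k]
  proof eventually_elim
    case (elim n)
    then show ?case
      using fdeg_funpow_fitted_tree_map_eq[OF \<open>0 < k\<close> elim] by simp
  qed
  ultimately show ?thesis
    by (simp add: Lim_transform_eventually)
qed

theorem mainTheorem3:
  fixes k :: nat
  assumes "k \<ge> 2"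
  shows "\<exists>(X :: nat \<Rightarrow> nat set) (f :: nat \<Rightarrow> nat \<Rightarrow> nat).
           (\<forall>n\<ge>1. finite (X n) \<and> card (X n) = n \<and> f n ` X n \<subseteq> X n) \<and>
           ((\<lambda>n. fdeg (X n) (X n) (f n)) \<longlonglongrightarrow> real k + 1) \<and>
           ((\<lambda>n. fdeg (X n) (X n) (f n ^^ k) / real n powr (1 - 1 / 2 ^ (k - 1)))
              \<longlonglongrightarrow> 1)"
proof (intro exI[of _ "\<lambda>n. {..<n}"] exI[of _ "fitted_tree_map k"] conjI allI impI)
  fix n :: nat
  show "finite {..<n}" "card {..<n} = n" "fitted_tree_map k n ` {..<n} \<subseteq> {..<n}"
    by (simp_all add: fitted_tree_map_lessThan)
next
  show "(\<lambda>n. fdeg {..<n} {..<n} (fitted_tree_map k n)) \<longlonglongrightarrow> real k + 1"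
    using assms by (intro tendsto_fdeg_fitted_tree_map) simp
next
  show "(\<lambda>n. fdeg {..<n} {..<n} (fitted_tree_map k n ^^ k) / real n powr (1 - 1 / 2 ^ (k - 1)))
      \<longlonglongrightarrow> 1"
    using assms by (rule tendsto_fdeg_funpow_fitted_tree_map)
qed

end
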